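(* Let $W$ be a matrix weight. For all $J\in\mathcal{D}$ and $1\le j\le d$, \[ \|W(J_-)^{1/2}h_J^{W,j}(J_-)\|_{\mathbb{C}^d}\le C(d),\qquad \|W(J_+)^{1/2}h_J^{W,j}(J_+)\|_{\mathbb{C}^d}\le C(d), \] where $C(d)$ depends only on $d$ and $h_J^{W,j}(J_\pm)$ denotes the constant value of $h_J^{W,j}$ on $J_\pm$.
   Context: A matrix weight is a $d\times d$ matrix-valued function on $\mathbb{R}$, positive definite a.e., with locally integrable entries. $\mathcal{D}$ is the standard dyadic grid, $J_\pm$ the right/left halves of $J$, $W(J)=\int_JW$. For $J\in\mathcal{D}$ let $v_J^1,\dots,v_J^d$ be an orthonormal eigenbasis of the positive definite matrix $W(J)W(J_+)^{-1}W(J_-)=W(J_-)W(J_+)^{-1}W(J_-)+W(J_-)$, $w_J^j=\|(W(J)W(J_+)^{-1}W(J_-))^{1/2}v_J^j\|$, and $h_J^{W,j}=(w_J^j)^{-1}\big(W(J_+)^{-1}W(J_-)v_J^j\mathbf{1}_{J_+}-v_J^j\mathbf{1}_{J_-}\big)$. *)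

theory Defs
  imports "HOL-Analysis.Analysis"
begin

(* d x d complex matrices: complex^'n^'n, with d = CARD('n). *)

definition cinner :: "complex^'n \<Rightarrow> complex^'n \<Rightarrow> complex" where
  "cinner v w = (\<Sum>i\<in>UNIV. cnj (v $ i) * w $ i)"

definition adjoint_mat :: "complex^'n^'n \<Rightarrow> complex^'n^'n" where
  "adjoint_mat A = (\<chi> i k. cnj (A $ k $ i))"

definition hermitian_mat :: "complex^'n^'n \<Rightarrow> bool" where
  "hermitian_mat A \<longleftrightarrow> adjoint_mat A = A"

definition pos_def_mat :: "complex^'n^'n \<Rightarrow> bool" where
  "pos_def_mat A \<longleftrightarrow> hermitian_mat A \<and> (\<forall>v. v \<noteq> 0 \<longrightarrow> Re (cinner v (A *v v)) > 0)"

definition pos_semidef_mat :: "complex^'n^'n \<Rightarrow> bool" where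
  "pos_semidef_mat A \<longleftrightarrow> hermitian_mat A \<and> (\<forall>v. Re (cinner v (A *v v)) \<ge> 0)"

definition msqrt :: "complex^'n^'n \<Rightarrow> complex^'n^'n" where
  "msqrt A = (THE B. pos_semidef_mat B \<and> B ** B = A)"

definition matrix_weight :: "(real \<Rightarrow> complex^'n^'n) \<Rightarrow> bool" where
  "matrix_weight W \<longleftrightarrow>
     (\<forall>i k a b. set_integrable lborel {a..b} (\<lambda>x. W x $ i $ k)) \<and>
     (AE x in lborel. pos_def_mat (W x))"

definition Wint :: "(real \<Rightarrow> complex^'n^'n) \<Rightarrow> real set \<Rightarrow> complex^'n^'n" where
  "Wint W J = (\<chi> i k. LINT x:J|lborel. W x $ i $ k)"

definition dyadic_interval :: "int \<Rightarrow> int \<Rightarrow> real set" where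
  "dyadic_interval n k = {real_of_int k * 2 powr (- real_of_int n) ..< (real_of_int k + 1) * 2 powr (- real_of_int n)}"

definition dyadic_grid :: "real set set" where
  "dyadic_grid = {dyadic_interval n k | n k. True}"

definition left_half :: "real set \<Rightarrow> real set" where
  "left_half J = {Inf J ..< (Inf J + Sup J) / 2}"

definition right_half :: "real set \<Rightarrow> real set" where
  "right_half J = {(Inf J + Sup J) / 2 ..< Sup J}"

definition haar_mat :: "(real \<Rightarrow> complex^'n^'n) \<Rightarrow> real set \<Rightarrow> complex^'n^'n" where
  "haar_mat W J = Wint W J ** matrix_inv (Wint W (right_half J)) ** Wint W (left_half J)"

definition orthonormal_eigenbasis :: "complex^'n^'n \<Rightarrow> ('n \<Rightarrow> complex^'n) \<Rightarrow> bool" where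
  "orthonormal_eigenbasis A v \<longleftrightarrow>
     (\<forall>i j. cinner (v i) (v j) = (if i = j then 1 else 0)) \<and>
     (\<forall>j. \<exists>c. A *v v j = c *s v j)"

definition haar_w :: "(real \<Rightarrow> complex^'n^'n) \<Rightarrow> real set \<Rightarrow> ('n \<Rightarrow> complex^'n) \<Rightarrow> 'n \<Rightarrow> real" where
  "haar_w W J v j = norm (msqrt (haar_mat W J) *v v j)"

text \<open>Constant value of h_J^{W,j} on J_+ and on J_-.\<close>
definition haar_plus :: "(real \<Rightarrow> complex^'n^'n) \<Rightarrow> real set \<Rightarrow> ('n \<Rightarrow> complex^'n) \<Rightarrow> 'n \<Rightarrow> complex^'n" where
  "haar_plus W J v j = complex_of_real (inverse (haar_w W J v j)) *s
     (matrix_inv (Wint W (right_half J)) ** Wint W (left_half J) *v v j)"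

definition haar_minus :: "(real \<Rightarrow> complex^'n^'n) \<Rightarrow> real set \<Rightarrow> ('n \<Rightarrow> complex^'n) \<Rightarrow> 'n \<Rightarrow> complex^'n" where
  "haar_minus W J v j = complex_of_real (inverse (haar_w W J v j)) *s (- v j)"

end

theory Submission
  imports Defs
begin

text \<open>
  Let \<open>A = W(J\<^sub>-)\<close>, \<open>B = W(J\<^sub>+)\<close>.  Since \<open>W(J) = A + B\<close>, the matrix whose eigenvectors
  define the Haar functions is \<open>M = (A + B) B\<^sup>-\<^sup>1 A = A B\<^sup>-\<^sup>1 A + A\<close>, and for every vector \<open>v\<close>
  \<open>\<langle>v, M v\<rangle> = \<langle>A v, B\<^sup>-\<^sup>1 A v\<rangle> + \<langle>v, A v\<rangle>\<close>.
  The first summand is \<open>\<parallel>B\<^sup>1\<^sup>/\<^sup>2 (B\<^sup>-\<^sup>1 A v)\<parallel>\<^sup>2\<close>, the second \<open>\<parallel>A\<^sup>1\<^sup>/\<^sup>2 v\<parallel>\<^sup>2\<close>, and both are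
  bounded by \<open>\<langle>v, M v\<rangle> = \<parallel>M\<^sup>1\<^sup>/\<^sup>2 v\<parallel>\<^sup>2 = w\<^sup>2\<close>.  Dividing by \<open>w\<close> shows that the values of
  \<open>h\<^sub>J\<^sup>W\<^sup>,\<^sup>j\<close> on \<open>J\<^sub>\<plusminus>\<close> have weighted norm at most \<open>1\<close>; so \<open>C(d) = 1\<close> works, for every
  vector \<open>v\<close>.
\<close>

section \<open>The complex inner product on \<open>complex^'n\<close>\<close>

text \<open>The real inner product of the Euclidean space \<open>complex^'n\<close> is the real part of
  the Hermitian form \<open>cinner\<close>; this lets us use the library's real-Euclidean results.\<close>
lemma inner_eq_Re_cinner: "inner x y = Re (cinner x (y::complex^'n))"
  by (simp add: inner_vec_def cinner_def inner_complex_def Re_sum)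

lemma cinner_commute: "cinner y x = cnj (cinner x (y::complex^'n))"
  by (simp add: cinner_def mult.commute)

lemma cinner_self: "cinner x x = complex_of_real ((norm (x::complex^'n))\<^sup>2)"
proof -
  have "cinner x x = (\<Sum>i\<in>UNIV. complex_of_real ((cmod (x$i))\<^sup>2))"
    unfolding cinner_def by (intro sum.cong refl) (metis complex_norm_square mult.commute)
  also have "\<dots> = complex_of_real ((norm x)\<^sup>2)"
    by (simp only: norm_vec_def L2_set_def real_sqrt_pow2 sum_nonneg zero_le_power2
        of_real_sum norm_complex_def)
  finally show ?thesis .
qed

lemma cinner_zero_left [simp]: "cinner 0 x = 0"
  by (simp add: cinner_def)

lemma cinner_zero_right [simp]: "cinner x 0 = 0"
  by (simp add: cinner_def)

lemma cinner_add_left: "cinner (x + y) z = cinner x z + cinner y (z::complex^'n)"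
  by (simp add: cinner_def sum.distrib distrib_right)

lemma cinner_add_right: "cinner z (x + y) = cinner z x + cinner z (y::complex^'n)"
  by (simp add: cinner_def sum.distrib distrib_left)

lemma cinner_diff_right: "cinner z (x - y) = cinner z x - cinner z (y::complex^'n)"
  by (simp add: cinner_def sum_subtractf right_diff_distrib)

lemma cinner_smult_left: "cinner (c *s x) y = cnj c * cinner x (y::complex^'n)"
  by (simp add: cinner_def sum_distrib_left mult.assoc)

lemma cinner_smult_right: "cinner x (c *s y) = c * cinner x (y::complex^'n)"
  by (simp add: cinner_def sum_distrib_left mult.assoc mult.left_commute)

lemma scaleR_eq_smult: "t *\<^sub>R x = complex_of_real t *s (x::complex^'n)"
  unfolding vec_eq_iff vector_scaleR_component vector_smult_component
  by (simp add: scaleR_conv_of_real)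

lemma cinner_sum_right:
  "finite S \<Longrightarrow> cinner x (\<Sum>u\<in>S. f u) = (\<Sum>u\<in>S. cinner x (f u :: complex^'n))"
  by (induction S rule: finite_induct) (auto simp: cinner_add_right)

lemma cinner_determines:
  assumes "\<And>y. cinner a y = cinner b (y::complex^'n)"
  shows "a = b"
proof -
  have "cinner c (axis i 1) = cnj (c $ i)" for c :: "complex^'n" and i
    by (simp add: cinner_def axis_def if_distrib[of "\<lambda>z. _ * z"] cong: if_cong)
  then show ?thesis using assms by (metis complex_cnj_cnj vec_eq_iff)
qed

lemma cinner_adjoint: "cinner x (A *v y) = cinner (adjoint_mat A *v x) (y::complex^'n)"
proof -
  have "cinner x (A *v y) = (\<Sum>i\<in>UNIV. \<Sum>k\<in>UNIV. cnj (x$i) * A$i$k * y$k)"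
    by (simp add: cinner_def matrix_vector_mult_def sum_distrib_left mult.assoc)
  also have "\<dots> = (\<Sum>k\<in>UNIV. \<Sum>i\<in>UNIV. cnj (x$i) * A$i$k * y$k)" by (rule sum.swap)
  also have "\<dots> = cinner (adjoint_mat A *v x) y"
    by (simp add: cinner_def matrix_vector_mult_def adjoint_mat_def sum_distrib_right
        sum_distrib_left mult.commute mult.left_commute)
  finally show ?thesis .
qed

lemma matrix_vector_mult_scaleR_complex: "A *v (c *\<^sub>R x) = c *\<^sub>R (A *v (x::complex^'n))"
  for A :: "complex^'n^'m"
  using linear_iff matrix_vector_mul_linear by blast


section \<open>Hermitian and positive matrices\<close>

lemma hermitian_cinner: "hermitian_mat A \<Longrightarrow> cinner x (A *v y) = cinner (A *v x) (y::complex^'n)"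
  by (simp add: cinner_adjoint hermitian_mat_def)

lemma hermitian_if_cinner:
  assumes "\<And>x y. cinner x (A *v y) = cinner (A *v x) (y::complex^'n)"
  shows "hermitian_mat A"
  unfolding hermitian_mat_def matrix_eq using assms by (metis cinner_adjoint cinner_determines)

lemma hermitian_inner: "hermitian_mat A \<Longrightarrow> inner x (A *v y) = inner (A *v x) (y::complex^'n)"
  by (simp add: inner_eq_Re_cinner hermitian_cinner)

lemma hermitian_diff:
  "hermitian_mat A \<Longrightarrow> hermitian_mat B \<Longrightarrow> hermitian_mat (A - B :: complex^'n^'n)"
  by (simp add: hermitian_mat_def adjoint_mat_def vec_eq_iff)

lemma hermitian_quadratic_line:
  assumes "hermitian_mat A"
  shows "inner (x + t *\<^sub>R y) (A *v (x + t *\<^sub>R y)) =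
     inner x (A *v x) + 2 * t * inner y (A *v (x::complex^'n)) + t\<^sup>2 * inner y (A *v y)"
proof -
  have "inner x (A *v y) = inner y (A *v x)"
    using hermitian_inner[OF assms] by (metis inner_commute)
  then show ?thesis
    by (simp add: matrix_vector_right_distrib matrix_vector_mult_scaleR_complex inner_add_left
        inner_add_right power2_eq_square algebra_simps)
qed

text \<open>A real quadratic \<open>a t\<^sup>2 + b t\<close> that is nonnegative everywhere has no linear term.
  This is the calculus-free form of ``the derivative vanishes at a minimum''.\<close>
lemma nonneg_quadratic_linear_coeff:
  fixes a b :: real
  assumes "\<And>t. 0 \<le> a * t\<^sup>2 + b * t"
  shows "b = 0"
proof (rule ccontr)
  assume "b \<noteq> 0"
  define c where "c = \<bar>a\<bar> + 1"
  define t where "t = - b / (2 * c)"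
  have c: "c > 0" by (simp add: c_def)
  have "a * t\<^sup>2 + b * t \<le> \<bar>a\<bar> * t\<^sup>2 + b * t" by (simp add: mult_right_mono power2_eq_square)
  also have "\<dots> < c * t\<^sup>2 + b * t" using \<open>b \<noteq> 0\<close> c by (simp add: c_def t_def)
  also have "\<dots> = - (b\<^sup>2) / (4 * c)" using c by (simp add: t_def field_simps power2_eq_square)
  also have "\<dots> \<le> 0" using c by simp
  finally show False using assms[of t] by simp
qed

lemma psd_hermitian: "pos_semidef_mat A \<Longrightarrow> hermitian_mat A"
  by (simp add: pos_semidef_mat_def)

lemma psd_nonneg: "pos_semidef_mat A \<Longrightarrow> 0 \<le> inner x (A *v x)"
  by (simp add: pos_semidef_mat_def inner_eq_Re_cinner)

lemma pd_psd: "pos_def_mat A \<Longrightarrow> pos_semidef_mat A"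
  unfolding pos_def_mat_def pos_semidef_mat_def
  by (metis cinner_zero_left less_le order_refl zero_complex.sel(1))

lemma psd_quadratic_zero:
  assumes P: "pos_semidef_mat P" and z: "inner z (P *v z) = 0"
  shows "P *v (z::complex^'n) = 0"
proof -
  have "0 \<le> inner (P *v z) (P *v (P *v z)) * t\<^sup>2 + 2 * inner (P *v z) (P *v z) * t" for t
  proof -
    have "0 \<le> inner (z + t *\<^sub>R (P *v z)) (P *v (z + t *\<^sub>R (P *v z)))" by (rule psd_nonneg[OF P])
    then show ?thesis
      unfolding hermitian_quadratic_line[OF psd_hermitian[OF P]] z by (simp add: algebra_simps)
  qed
  from nonneg_quadratic_linear_coeff[OF this] show ?thesis by simp
qed

lemma pd_invertible:
  assumes "pos_def_mat (A::complex^'n^'n)"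
  shows "invertible A"
proof -
  have "A *v x = 0 \<Longrightarrow> x = 0" for x
    using assms unfolding pos_def_mat_def by (metis cinner_zero_right less_irrefl zero_complex.sel(1))
  then show ?thesis by (metis invertible_left_inverse matrix_left_invertible_ker)
qed

lemma matrix_inv_props:
  assumes "invertible (A::complex^'n^'n)"
  shows "A ** matrix_inv A = mat 1" "matrix_inv A ** A = mat 1"
proof -
  have "\<exists>A'. A ** A' = mat 1 \<and> A' ** A = mat 1" using assms invertible_def by blast
  from someI_ex[OF this] show "A ** matrix_inv A = mat 1" "matrix_inv A ** A = mat 1"
    unfolding matrix_inv_def by auto
qed

lemma pd_inverse_psd:
  assumes "pos_def_mat (B::complex^'n^'n)"
  shows "pos_semidef_mat (matrix_inv B)"
proof -
  let ?N = "matrix_inv B"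
  have BN: "B *v (?N *v y) = y" for y
    using matrix_inv_props(1)[OF pd_invertible[OF assms]] by (simp add: matrix_vector_mul_assoc)
  have hB: "hermitian_mat B" using assms pd_psd psd_hermitian by blast
  have "cinner x (?N *v y) = cinner (?N *v x) y" for x y
    using hermitian_cinner[OF hB, of "?N *v x" "?N *v y"] by (simp add: BN)
  then have hN: "hermitian_mat ?N" by (rule hermitian_if_cinner)
  have "0 \<le> Re (cinner y (?N *v y))" for y
    using psd_nonneg[OF pd_psd[OF assms], of "?N *v y"]
    by (simp add: BN inner_commute flip: inner_eq_Re_cinner)
  with hN show ?thesis by (simp add: pos_semidef_mat_def)
qed


section \<open>Orthonormal sets\<close>

definition orthonormal_set :: "(complex^'n) set \<Rightarrow> bool" where
  "orthonormal_set U \<longleftrightarrow> (\<forall>u\<in>U. \<forall>w\<in>U. cinner u w = (if u = w then 1 else 0))"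

lemma orthonormal_coeff:
  assumes U: "orthonormal_set U" and S: "finite S" "S \<subseteq> U" and u: "u \<in> S"
  shows "cinner u (\<Sum>w\<in>S. c w *s w) = c u"
proof -
  have "cinner u (\<Sum>w\<in>S. c w *s w) = (\<Sum>w\<in>S. c w * cinner u w)"
    by (simp add: cinner_sum_right[OF S(1)] cinner_smult_right)
  also have "\<dots> = (\<Sum>w\<in>S. c w * (if u = w then 1 else 0))"
    using U S u unfolding orthonormal_set_def by (intro sum.cong refl) (simp add: subset_iff)
  also have "\<dots> = c u" using S u by (simp add: if_distrib[of "\<lambda>x. _ * x"] cong: if_cong)
  finally show ?thesis .
qed

lemma orthonormal_independent:
  assumes "orthonormal_set U"
  shows "vec.independent U"
  unfolding vec.independent_explicit_finite_subsets
  using orthonormal_coeff[OF assms] by (metis cinner_zero_right)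

lemma orthonormal_card:
  assumes "orthonormal_set (U::(complex^'n) set)"
  shows "finite U" "card U \<le> CARD('n)"
  using vec.independent_bound_general[OF orthonormal_independent[OF assms]]
    vec.dim_subset[OF subset_UNIV, of U] vec_dim_card[where 'a=complex and 'n='n] by linarith+

lemma orthonormal_expansion:
  assumes U: "orthonormal_set (U::(complex^'n) set)" and card: "card U = CARD('n)"
  shows "x = (\<Sum>u\<in>U. cinner u x *s u)"
proof -
  have fin: "finite U" using orthonormal_card[OF U] by simp
  have "UNIV \<subseteq> vec.span U"
    using vec.card_ge_dim_independent[OF subset_UNIV orthonormal_independent[OF U]] card
      vec_dim_card[where 'a=complex and 'n='n] by simp
  then obtain c where x: "x = (\<Sum>w\<in>U. c w *s w)"
    using vec.span_finite[OF fin] by blast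
  have "c u = cinner u x" if "u \<in> U" for u
    using orthonormal_coeff[OF U fin order_refl that] x by simp
  then show ?thesis by (subst x) (intro sum.cong refl, simp)
qed

lemma orthonormal_insert:
  assumes U: "orthonormal_set U" and y: "norm y = 1" "\<forall>u\<in>U. cinner u y = 0"
  shows "orthonormal_set (insert y U)" "y \<notin> U"
proof -
  have yy: "cinner y y = 1" using y(1) by (simp add: cinner_self)
  have "\<forall>u\<in>U. cinner y u = 0" using y(2) by (metis cinner_commute complex_cnj_zero)
  then show "y \<notin> U" "orthonormal_set (insert y U)"
    using U yy y(2) unfolding orthonormal_set_def by auto
qed

lemma orthonormal_extend:
  assumes U: "orthonormal_set (U::(complex^'n) set)" and card: "card U < CARD('n)"
  obtains y where "norm y = 1" "\<forall>u\<in>U. cinner u y = 0"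
proof -
  have fin: "finite U" using orthonormal_card[OF U] by simp
  have "\<not> UNIV \<subseteq> vec.span U"
    using vec.dim_le_card[OF _ fin] card vec_dim_card[where 'a=complex and 'n='n] by (metis not_le)
  then obtain x where x: "x \<notin> vec.span U" by blast
  define z where "z = x - (\<Sum>w\<in>U. cinner w x *s w)"
  have "(\<Sum>w\<in>U. cinner w x *s w) \<in> vec.span U"
    by (intro vec.span_sum vec.span_scale vec.span_base)
  then have "z \<noteq> 0" using x by (auto simp: z_def)
  have orth: "cinner u z = 0" if "u \<in> U" for u
    using orthonormal_coeff[OF U fin order_refl that] by (simp add: z_def cinner_diff_right)
  show ?thesis
  proof
    show "norm ((1 / norm z) *\<^sub>R z) = 1" using \<open>z \<noteq> 0\<close> by simp
    show "\<forall>u\<in>U. cinner u ((1 / norm z) *\<^sub>R z) = 0"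
      using orth by (simp add: scaleR_eq_smult cinner_smult_right)
  qed
qed


section \<open>The spectral theorem for Hermitian matrices\<close>

text \<open>\<open>U\<close> consists of eigenvectors of \<open>A\<close>; for unit vectors the eigenvalue of \<open>u\<close> is the
  Rayleigh quotient \<open>\<langle>u, A u\<rangle>\<close>.\<close>
definition eigenvector_set :: "complex^'n^'n \<Rightarrow> (complex^'n) set \<Rightarrow> bool" where
  "eigenvector_set A U \<longleftrightarrow> (\<forall>u\<in>U. A *v u = inner u (A *v u) *\<^sub>R u)"

text \<open>First-order condition for a maximiser of the Rayleigh quotient on a real subspace \<open>S\<close>:
  the residual \<open>A x\<^sub>0 - \<mu> x\<^sub>0\<close> is orthogonal to \<open>S\<close>.\<close>
lemma rayleigh_maximizer_residual:
  assumes h: "hermitian_mat A"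
    and S: "\<And>x y t. x \<in> S \<Longrightarrow> y \<in> S \<Longrightarrow> x + t *\<^sub>R y \<in> S"
    and x0: "x0 \<in> S" "inner x0 x0 = 1" "inner x0 (A *v x0) = \<mu>"
    and max: "\<And>z. z \<in> S \<Longrightarrow> inner z (A *v z) \<le> \<mu> * inner z z"
    and y: "y \<in> S"
  shows "inner y (A *v x0 - \<mu> *\<^sub>R x0) = (0::real)"
proof -
  have "0 \<le> (\<mu> * inner y y - inner y (A *v y)) * t\<^sup>2 + 2 * (\<mu> * inner y x0 - inner y (A *v x0)) * t"
    for t :: real
  proof -
    have "inner (x0 + t *\<^sub>R y) (x0 + t *\<^sub>R y) = inner x0 x0 + 2 * t * inner y x0 + t\<^sup>2 * inner y y"
      by (simp add: inner_add_left inner_add_right inner_commute[of x0 y] power2_eq_square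
          algebra_simps)
    moreover have "inner (x0 + t *\<^sub>R y) (A *v (x0 + t *\<^sub>R y)) \<le> \<mu> * inner (x0 + t *\<^sub>R y) (x0 + t *\<^sub>R y)"
      by (intro max S x0 y)
    ultimately have "\<mu> + 2 * t * inner y (A *v x0) + t\<^sup>2 * inner y (A *v y)
        \<le> \<mu> * (1 + 2 * t * inner y x0 + t\<^sup>2 * inner y y)"
      unfolding hermitian_quadratic_line[OF h] x0(2,3) by simp
    then show ?thesis by (simp add: algebra_simps)
  qed
  from nonneg_quadratic_linear_coeff[OF this] show ?thesis by (simp add: inner_diff_right)
qed

text \<open>If the eigenvectors \<open>U\<close> of a Hermitian \<open>A\<close> do not fill the space, the orthogonal
  complement of \<open>U\<close> contains a further unit eigenvector: a maximiser of the Rayleigh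
  quotient on it (which exists by compactness of the unit sphere).\<close>
lemma hermitian_eigenvector_orthogonal:
  assumes h: "hermitian_mat A" and U: "eigenvector_set A U"
    and ex: "norm y = 1" "\<forall>u\<in>U. cinner u y = 0"
  obtains x where "norm x = 1" "\<forall>u\<in>U. cinner u x = 0" "A *v x = inner x (A *v x) *\<^sub>R (x::complex^'n)"
proof -
  define S where "S = {x::complex^'n. \<forall>u\<in>U. cinner u x = 0}"
  have S_comb: "x + t *\<^sub>R z \<in> S" if "x \<in> S" "z \<in> S" for x z t
    using that by (simp add: S_def cinner_add_right scaleR_eq_smult cinner_smult_right)
  have "closed S"
  proof -
    have "S = (\<Inter>u\<in>U. {x. cinner u x = 0})" by (auto simp: S_def)
    moreover have "continuous_on UNIV (\<lambda>x. cinner u (x::complex^'n))" for u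
      unfolding cinner_def by (intro continuous_intros)
    ultimately show ?thesis by (auto intro!: closed_INT closed_Collect_eq continuous_on_const)
  qed
  then have "compact (S \<inter> sphere 0 1)" by (intro closed_Int_compact compact_sphere)
  moreover have "S \<inter> sphere 0 1 \<noteq> {}" using ex by (auto simp: S_def)
  moreover have "continuous_on (S \<inter> sphere 0 1) (\<lambda>x. inner x (A *v x))"
    by (intro continuous_intros linear_continuous_on matrix_vector_mul_bounded_linear)
  ultimately have "\<exists>x0\<in>S \<inter> sphere 0 1. \<forall>z\<in>S \<inter> sphere 0 1. inner z (A *v z) \<le> inner x0 (A *v x0)"
    by (rule continuous_attains_sup)
  then obtain x0 where x0: "x0 \<in> S \<inter> sphere 0 1"
    and x0_max: "\<And>z. z \<in> S \<inter> sphere 0 1 \<Longrightarrow> inner z (A *v z) \<le> inner x0 (A *v x0)"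
    by blast
  define \<mu> where "\<mu> = inner x0 (A *v x0)"
  have x0S: "x0 \<in> S" and x0_unit: "norm x0 = 1" "inner x0 x0 = 1"
    using x0 by (auto simp: inner_commute dot_square_norm)
  have bound: "inner z (A *v z) \<le> \<mu> * inner z z" if "z \<in> S" for z
  proof (cases "z = 0")
    case False
    define z' where "z' = (1 / norm z) *\<^sub>R z"
    have "z' \<in> S \<inter> sphere 0 1" using S_comb[of 0 z "1 / norm z"] that False
      by (simp add: z'_def S_def)
    then have "inner z' (A *v z') \<le> \<mu>" using x0_max \<mu>_def by blast
    then have "inner z (A *v z) \<le> \<mu> * (norm z)\<^sup>2" using False
      by (simp add: z'_def matrix_vector_mult_scaleR_complex power2_eq_square divide_le_eq)
    then show ?thesis by (simp add: power2_norm_eq_inner)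
  qed simp
  define r where "r = A *v x0 - \<mu> *\<^sub>R x0"
  have "r \<in> S" unfolding S_def
  proof (intro CollectI ballI)
    fix u assume "u \<in> U"
    define c where "c = complex_of_real (inner u (A *v u))"
    have "A *v u = c *s u"
      using U \<open>u \<in> U\<close> by (simp add: c_def eigenvector_set_def flip: scaleR_eq_smult)
    then have "cinner u (A *v x0) = cnj c * cinner u x0"
      by (simp add: hermitian_cinner[OF h] cinner_smult_left)
    then have "cinner u (A *v x0) = 0" using x0S \<open>u \<in> U\<close> by (simp add: S_def)
    then show "cinner u r = 0" using x0S \<open>u \<in> U\<close>
      by (simp add: S_def r_def cinner_diff_right scaleR_eq_smult cinner_smult_right)
  qed
  then have "inner r r = 0"
    using rayleigh_maximizer_residual[OF h S_comb x0S x0_unit(2) \<mu>_def[symmetric] bound]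
    by (simp add: r_def)
  then have "A *v x0 = inner x0 (A *v x0) *\<^sub>R x0" by (simp add: r_def \<mu>_def)
  then show ?thesis using that x0S x0_unit by (simp add: S_def)
qed

lemma hermitian_eigenbasis:
  assumes h: "hermitian_mat (A::complex^'n^'n)"
  obtains U where "orthonormal_set U" "card U = CARD('n)" "eigenvector_set A U"
proof -
  have "k \<le> CARD('n) \<Longrightarrow> \<exists>U. orthonormal_set U \<and> eigenvector_set A U \<and> card U = k" for k
  proof (induction k)
    case 0
    have "orthonormal_set {}" "eigenvector_set A {}"
      by (simp_all add: orthonormal_set_def eigenvector_set_def)
    then show ?case by force
  next
    case (Suc k)
    then obtain U where U: "orthonormal_set U" "eigenvector_set A U" and card: "card U = k"
      by auto
    obtain y where "norm y = 1" "\<forall>u\<in>U. cinner u y = 0"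
      using orthonormal_extend[OF U(1)] card Suc.prems by auto
    then obtain x where x: "norm x = 1" "\<forall>u\<in>U. cinner u x = 0" "A *v x = inner x (A *v x) *\<^sub>R x"
      using hermitian_eigenvector_orthogonal[OF h U(2)] by blast
    have "orthonormal_set (insert x U)" "x \<notin> U" using orthonormal_insert[OF U(1) x(1,2)] by auto
    moreover have "eigenvector_set A (insert x U)" using U(2) x(3) by (simp add: eigenvector_set_def)
    moreover have "card (insert x U) = Suc k"
      using orthonormal_card(1)[OF U(1)] card \<open>x \<notin> U\<close> by simp
    ultimately show ?case by blast
  qed
  then show ?thesis using that by blast
qed

lemma eigenbasis_expansion:
  assumes U: "orthonormal_set U" "card U = CARD('n)" "eigenvector_set A U"
  shows "A *v x = (\<Sum>u\<in>U. (complex_of_real (inner u (A *v u)) * cinner u x) *s (u::complex^'n))"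
proof -
  have fin: "finite U" using orthonormal_card(1)[OF U(1)] .
  have "A *v x = A *v (\<Sum>u\<in>U. cinner u x *s u)" using orthonormal_expansion[OF U(1,2)] by simp
  also have "\<dots> = (\<Sum>u\<in>U. cinner u x *s (A *v u))" by (simp add: vec.sum vec.scale)
  also have "\<dots> = (\<Sum>u\<in>U. (complex_of_real (inner u (A *v u)) * cinner u x) *s u)"
  proof (rule sum.cong[OF refl])
    fix u assume "u \<in> U"
    define c where "c = complex_of_real (inner u (A *v u))"
    have "A *v u = c *s u"
      using U(3) \<open>u \<in> U\<close> by (simp add: c_def eigenvector_set_def flip: scaleR_eq_smult)
    then show "cinner u x *s (A *v u) = (c * cinner u x) *s u"
      by (simp add: mult.commute)
  qed
  finally show ?thesis .
qed


section \<open>Square roots of positive semidefinite matrices\<close>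

text \<open>Existence: in an orthonormal eigenbasis of \<open>A\<close>, take square roots of the eigenvalues.\<close>
lemma psd_sqrt_exists:
  assumes A: "pos_semidef_mat (A::complex^'n^'n)"
  obtains B where "pos_semidef_mat B" "B ** B = A"
proof -
  obtain U where U: "orthonormal_set U" "card U = CARD('n)" "eigenvector_set A U"
    using hermitian_eigenbasis[OF psd_hermitian[OF A]] .
  have fin: "finite U" using orthonormal_card(1)[OF U(1)] .
  define s where "s u = complex_of_real (sqrt (inner u (A *v u)))" for u
  have s_sq: "s u * s u = complex_of_real (inner u (A *v u))" for u
    using psd_nonneg[OF A, of u] by (simp add: s_def flip: of_real_mult)
  define B where "B = (\<chi> i k. \<Sum>u\<in>U. s u * u$i * cnj (u$k))"
  have B_apply: "B *v x = (\<Sum>u\<in>U. (s u * cinner u x) *s u)" for x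
  proof -
    have "(B *v x) $ i = (\<Sum>k\<in>UNIV. \<Sum>u\<in>U. s u * u$i * cnj (u$k) * x$k)" for i
      by (simp add: B_def matrix_vector_mult_def sum_distrib_right)
    also have "\<dots> i = (\<Sum>u\<in>U. \<Sum>k\<in>UNIV. s u * u$i * cnj (u$k) * x$k)" for i
      by (rule sum.swap)
    also have "\<dots> i = (\<Sum>u\<in>U. (s u * cinner u x) *s u) $ i" for i
      by (simp add: sum_component cinner_def sum_distrib_left sum_distrib_right mult_ac)
    finally show ?thesis by (simp add: vec_eq_iff)
  qed
  have "B *v (B *v x) = A *v x" for x
  proof -
    have "B *v (B *v x) = (\<Sum>u\<in>U. (s u * (s u * cinner u x)) *s u)"
      unfolding B_apply[of "B *v x"]
      by (intro sum.cong refl) (simp add: B_apply orthonormal_coeff[OF U(1) fin order_refl])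
    also have "\<dots> = A *v x"
      by (simp add: eigenbasis_expansion[OF U, of x] mult.assoc[symmetric] s_sq)
    finally show ?thesis .
  qed
  then have "B ** B = A" by (simp add: matrix_eq matrix_vector_mul_assoc)
  moreover have "hermitian_mat B"
    by (simp add: hermitian_mat_def adjoint_mat_def B_def vec_eq_iff s_def mult_ac)
  moreover have "0 \<le> Re (cinner x (B *v x))" for x
  proof -
    have "cinner x (B *v x) = (\<Sum>u\<in>U. s u * (cinner u x * cnj (cinner u x)))"
      unfolding B_apply
      by (simp add: cinner_sum_right[OF fin] cinner_smult_right mult_ac cinner_commute[of u x for u])
    also have "\<dots> = (\<Sum>u\<in>U. complex_of_real (sqrt (inner u (A *v u)) * (cmod (cinner u x))\<^sup>2))"
      by (intro sum.cong refl) (simp only: s_def of_real_mult complex_norm_square)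
    finally show ?thesis
      by (simp add: Re_sum sum_nonneg psd_nonneg[OF A])
  qed
  ultimately show ?thesis by (intro that) (auto simp: pos_semidef_mat_def)
qed

text \<open>Uniqueness: if \<open>B\<^sup>2 = C\<^sup>2\<close> for positive semidefinite \<open>B, C\<close>, then \<open>D = B - C\<close> satisfies
  \<open>D B + C D = 0\<close>; testing this on a unit eigenvector \<open>u\<close> of \<open>D\<close> with eigenvalue \<open>\<lambda>\<close> gives
  \<open>\<lambda> (\<langle>u, B u\<rangle> + \<langle>u, C u\<rangle>) = 0\<close>, which forces \<open>D u = 0\<close>.  Hence \<open>D = 0\<close>.\<close>
lemma psd_sqrt_unique:
  assumes B: "pos_semidef_mat B" and C: "pos_semidef_mat C" and sq: "B ** B = C ** (C::complex^'n^'n)"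
  shows "B = C"
proof -
  define D where "D = B - C"
  have hD: "hermitian_mat D"
    unfolding D_def by (intro hermitian_diff psd_hermitian B C)
  obtain U where U: "orthonormal_set U" "card U = CARD('n)" "eigenvector_set D U"
    using hermitian_eigenbasis[OF hD] .
  have D_eq: "D *v (B *v x) + C *v (D *v x) = 0" for x
  proof -
    have "B *v (B *v x) = C *v (C *v x)" using sq by (simp add: matrix_vector_mul_assoc)
    then show ?thesis by (simp add: D_def matrix_vector_mult_diff_rdistrib matrix_vector_mult_diff_distrib)
  qed
  have kernel: "D *v u = 0" if "u \<in> U" for u
  proof -
    define ev where "ev = inner u (D *v u)"
    have eig: "D *v u = ev *\<^sub>R u" using U(3) that by (simp add: eigenvector_set_def ev_def)
    have "0 = inner u (D *v (B *v u)) + inner u (C *v (D *v u))"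
      using D_eq[of u] by (simp flip: inner_add_right)
    also have "\<dots> = ev * (inner u (B *v u) + inner u (C *v u))"
      by (simp add: hermitian_inner[OF hD] eig matrix_vector_mult_scaleR_complex algebra_simps)
    finally consider "ev = 0" | "inner u (B *v u) = 0" "inner u (C *v u) = 0"
      using psd_nonneg[OF B, of u] psd_nonneg[OF C, of u] by (metis add_nonneg_eq_0_iff mult_eq_0_iff)
    then show ?thesis
    proof cases
      case 2
      then show ?thesis
        using psd_quadratic_zero[OF B, of u] psd_quadratic_zero[OF C, of u]
        by (simp add: D_def matrix_vector_mult_diff_rdistrib)
    qed (simp add: eig)
  qed
  have "D *v x = 0" for x
    using kernel by (simp add: eigenbasis_expansion[OF U, of x])
  then show ?thesis by (simp add: D_def matrix_eq matrix_vector_mult_diff_rdistrib)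
qed

lemma msqrt:
  assumes "pos_semidef_mat (A::complex^'n^'n)"
  shows "pos_semidef_mat (msqrt A)" "msqrt A ** msqrt A = A"
proof -
  have "\<exists>!B. pos_semidef_mat B \<and> B ** B = A"
    using psd_sqrt_exists[OF assms] psd_sqrt_unique by metis
  from theI'[OF this] show "pos_semidef_mat (msqrt A)" "msqrt A ** msqrt A = A"
    unfolding msqrt_def by auto
qed

lemma msqrt_norm_square:
  assumes A: "pos_semidef_mat (A::complex^'n^'n)"
  shows "(norm (msqrt A *v x))\<^sup>2 = inner x (A *v x)"
proof -
  have "(norm (msqrt A *v x))\<^sup>2 = inner (msqrt A *v x) (msqrt A *v x)"
    by (simp add: power2_norm_eq_inner)
  also have "\<dots> = inner x (msqrt A *v (msqrt A *v x))"
    using hermitian_inner[OF psd_hermitian[OF msqrt(1)[OF A]]] by simp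
  also have "\<dots> = inner x (A *v x)" by (simp add: matrix_vector_mul_assoc msqrt(2)[OF A])
  finally show ?thesis .
qed


lemma haar_matrix_apply:
  assumes A: "pos_def_mat A" and B: "pos_def_mat (B::complex^'n^'n)"
  shows "((A + B) ** matrix_inv B ** A) *v x = A *v (matrix_inv B *v (A *v x)) + A *v x"
proof -
  have "B *v (matrix_inv B *v y) = y" for y
    using matrix_inv_props(1)[OF pd_invertible[OF B]] by (simp add: matrix_vector_mul_assoc)
  then show ?thesis
    by (simp add: matrix_vector_mul_assoc[symmetric] matrix_vector_mult_add_rdistrib)
qed

lemma haar_matrix_psd:
  assumes A: "pos_def_mat A" and B: "pos_def_mat (B::complex^'n^'n)"
  shows "pos_semidef_mat ((A + B) ** matrix_inv B ** A)"
proof -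
  let ?N = "matrix_inv B"
  have hA: "hermitian_mat A" and N: "pos_semidef_mat ?N"
    using A pd_psd psd_hermitian pd_inverse_psd[OF B] by blast+
  note M = haar_matrix_apply[OF A B]
  have "cinner x (A *v (?N *v (A *v y))) = cinner (A *v (?N *v (A *v x))) y" for x y
    by (simp add: hermitian_cinner[OF hA] hermitian_cinner[OF psd_hermitian[OF N]])
  then have "hermitian_mat ((A + B) ** ?N ** A)"
    by (intro hermitian_if_cinner) (simp add: M cinner_add_right cinner_add_left hermitian_cinner[OF hA])
  moreover have "0 \<le> inner x (((A + B) ** ?N ** A) *v x)" for x
    using psd_nonneg[OF N, of "A *v x"] psd_nonneg[OF pd_psd[OF A], of x]
    by (simp add: M inner_add_right hermitian_inner[OF hA])
  ultimately show ?thesis by (simp add: pos_semidef_mat_def inner_eq_Re_cinner)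
qed

lemma norm_msqrt_le:
  assumes A: "pos_semidef_mat A" and M: "pos_semidef_mat (M::complex^'n^'n)"
    and le: "inner x (A *v x) \<le> inner v (M *v v)"
  shows "norm (msqrt A *v x) \<le> norm (msqrt M *v v)"
proof -
  have "(norm (msqrt A *v x))\<^sup>2 \<le> (norm (msqrt M *v v))\<^sup>2"
    unfolding msqrt_norm_square[OF A] msqrt_norm_square[OF M] by (rule le)
  then show ?thesis by (rule power2_le_imp_le) simp
qed

text \<open>Dividing by an upper bound \<open>w\<close> of the norm gives norm at most \<open>1\<close>; the degenerate
  case \<open>w = 0\<close> is harmless since then \<open>inverse w = 0\<close>.\<close>
lemma norm_scaled_le_one:
  fixes S :: "complex^'n^'m"
  assumes "norm (S *v y) \<le> w"
  shows "norm (S *v (complex_of_real (inverse w) *s y)) \<le> 1"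
proof -
  have w0: "w \<ge> 0" using assms norm_ge_zero order_trans by blast
  moreover have "complex_of_real (inverse w) *s y = inverse w *\<^sub>R y" by (rule scaleR_eq_smult[symmetric])
  ultimately have "norm (S *v (complex_of_real (inverse w) *s y)) = inverse w * norm (S *v y)"
    by (simp only: matrix_vector_mult_scaleR_complex norm_scaleR) simp
  also have "\<dots> \<le> 1" using assms w0 by (cases "w = 0") (auto simp: field_simps)
  finally show ?thesis .
qed

text \<open>The core estimate, with \<open>A = W(J\<^sub>-)\<close>, \<open>B = W(J\<^sub>+)\<close>: normalising \<open>v\<close> and
  \<open>B\<^sup>-\<^sup>1 A v\<close> by \<open>w = \<parallel>M\<^sup>1\<^sup>/\<^sup>2 v\<parallel>\<close> makes their \<open>A\<close>- resp.\ \<open>B\<close>-weighted norms at most \<open>1\<close>,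
  because \<open>w\<^sup>2\<close> dominates each of the two terms in the quadratic form of \<open>M\<close>.\<close>
lemma haar_vector_bounds:
  fixes v :: "complex^'n"
  assumes A: "pos_def_mat (A::complex^'n^'n)" and B: "pos_def_mat B"
  defines "M \<equiv> (A + B) ** matrix_inv B ** A"
  defines "w \<equiv> norm (msqrt M *v v)"
  shows "norm (msqrt A *v (complex_of_real (inverse w) *s (- v))) \<le> 1"
    "norm (msqrt B *v (complex_of_real (inverse w) *s (matrix_inv B ** A *v v))) \<le> 1"
proof -
  let ?N = "matrix_inv B"
  have hA: "hermitian_mat A" and N: "pos_semidef_mat ?N"
    using A pd_psd psd_hermitian pd_inverse_psd[OF B] by blast+
  have BN: "B *v (?N *v y) = y" for y
    using matrix_inv_props(1)[OF pd_invertible[OF B]] by (simp add: matrix_vector_mul_assoc)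
  have quad: "inner v (M *v v) = inner (A *v v) (?N *v (A *v v)) + inner v (A *v v)"
    by (simp add: M_def haar_matrix_apply[OF A B] inner_add_right hermitian_inner[OF hA])
  have M: "pos_semidef_mat M" unfolding M_def by (rule haar_matrix_psd[OF A B])
  have "inner (- v) (A *v (- v)) \<le> inner v (M *v v)"
    using quad psd_nonneg[OF N, of "A *v v"] by (simp add: vec.neg)
  from norm_msqrt_le[OF pd_psd[OF A] M this]
  show "norm (msqrt A *v (complex_of_real (inverse w) *s (- v))) \<le> 1"
    unfolding w_def by (rule norm_scaled_le_one)
  have "inner (?N *v (A *v v)) (B *v (?N *v (A *v v))) \<le> inner v (M *v v)"
    using quad psd_nonneg[OF pd_psd[OF A], of v] by (simp add: BN inner_commute)
  from norm_msqrt_le[OF pd_psd[OF B] M this]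
  show "norm (msqrt B *v (complex_of_real (inverse w) *s (?N ** A *v v))) \<le> 1"
    unfolding w_def matrix_vector_mul_assoc[symmetric] by (rule norm_scaled_le_one)
qed


section \<open>Averages of a matrix weight\<close>

lemma matrix_weight_integrable:
  assumes W: "matrix_weight W" and I: "I \<in> sets lborel" "I \<subseteq> {a..b}"
  shows "integrable lborel (\<lambda>x. indicator I x *\<^sub>R W x $ i $ k)"
proof -
  have "set_integrable lborel {a..b} (\<lambda>x. W x $ i $ k)" using W matrix_weight_def by blast
  then have "set_integrable lborel I (\<lambda>x. W x $ i $ k)" by (rule set_integrable_subset) (use I in auto)
  then show ?thesis unfolding set_integrable_def .
qed

lemma Wint_entry: "Wint W I $ i $ k = (\<integral>x. indicator I x *\<^sub>R W x $ i $ k \<partial>lborel)"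
  by (simp add: Wint_def set_lebesgue_integral_def)

lemma Wint_Un:
  assumes W: "matrix_weight W" and I: "I \<in> sets lborel" "I \<subseteq> {a..b}"
    and K: "K \<in> sets lborel" "K \<subseteq> {a..b}" and disj: "I \<inter> K = {}"
  shows "Wint W (I \<union> K) = Wint W I + Wint W K"
proof -
  have "indicator (I \<union> K) x = (indicator I x + indicator K x :: real)" for x
    using disj by (auto simp: indicator_def)
  then show ?thesis
    using matrix_weight_integrable[OF W I] matrix_weight_integrable[OF W K]
    by (simp add: vec_eq_iff Wint_entry scaleR_add_left)
qed

lemma Wint_hermitian:
  assumes W: "matrix_weight W" and I: "I \<in> sets lborel" "I \<subseteq> {a..b}"
  shows "hermitian_mat (Wint W I)"
proof -
  have AE: "AE x in lborel. hermitian_mat (W x)"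
    using W by (auto simp: matrix_weight_def pos_def_mat_def elim: AE_mp)
  have "cnj (Wint W I $ k $ i) = Wint W I $ i $ k" for i k
  proof -
    have "cnj (Wint W I $ k $ i) = (\<integral>x. cnj (indicator I x *\<^sub>R W x $ k $ i) \<partial>lborel)"
      unfolding Wint_entry by (rule Bochner_Integration.integral_cnj[symmetric])
    also have "\<dots> = Wint W I $ i $ k"
      unfolding Wint_entry
    proof (rule integral_cong_AE)
      show "AE x in lborel. cnj (indicator I x *\<^sub>R W x $ k $ i) = indicator I x *\<^sub>R W x $ i $ k"
        using AE by eventually_elim (auto simp: hermitian_mat_def adjoint_mat_def vec_eq_iff)
    qed (intro borel_measurable_integrable integrable_cnj matrix_weight_integrable[OF W I])+
    finally show ?thesis .
  qed
  then show ?thesis by (simp add: hermitian_mat_def adjoint_mat_def vec_eq_iff)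
qed

lemma Wint_quadratic_form:
  fixes v :: "complex^'n"
  assumes W: "matrix_weight W" and I: "I \<in> sets lborel" "I \<subseteq> {a..b}"
  defines "q \<equiv> \<lambda>x. indicator I x * Re (cinner v (W x *v v))"
  shows "integrable lborel q" "Re (cinner v (Wint W I *v v)) = (\<integral>x. q x \<partial>lborel)"
proof -
  note int = matrix_weight_integrable[OF W I]
  define Q where "Q x = indicator I x *\<^sub>R cinner v (W x *v v)" for x
  have Q_sum: "Q x = (\<Sum>i\<in>UNIV. \<Sum>k\<in>UNIV. cnj (v $ i) * ((indicator I x *\<^sub>R W x $ i $ k) * v $ k))"
    for x by (simp add: Q_def cinner_def matrix_vector_mult_def sum_distrib_left scaleR_conv_of_real mult_ac)
  have intQ: "integrable lborel Q"
    unfolding Q_sum by (intro Bochner_Integration.integrable_sum integrable_mult_right integrable_mult_left int)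
  have q: "q = (\<lambda>x. Re (Q x))" by (simp add: q_def Q_def fun_eq_iff)
  show "integrable lborel q" unfolding q using intQ by (rule integrable_Re)
  have "(\<integral>x. Q x \<partial>lborel) =
      (\<Sum>i\<in>UNIV. \<integral>x. (\<Sum>k\<in>UNIV. cnj (v $ i) * ((indicator I x *\<^sub>R W x $ i $ k) * v $ k)) \<partial>lborel)"
    unfolding Q_sum
    by (intro Bochner_Integration.integral_sum Bochner_Integration.integrable_sum
        integrable_mult_right integrable_mult_left int)
  also have "\<dots> = (\<Sum>i\<in>UNIV. \<Sum>k\<in>UNIV. \<integral>x. cnj (v $ i) * ((indicator I x *\<^sub>R W x $ i $ k) * v $ k) \<partial>lborel)"
    by (intro sum.cong refl Bochner_Integration.integral_sum integrable_mult_right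
        integrable_mult_left int)
  also have "\<dots> = cinner v (Wint W I *v v)"
    by (simp only: integral_mult_right_zero integral_mult_left_zero Wint_entry)
      (simp add: cinner_def matrix_vector_mult_def sum_distrib_left Wint_entry)
  finally show "Re (cinner v (Wint W I *v v)) = (\<integral>x. q x \<partial>lborel)"
    unfolding q using integral_Re[OF intQ] by simp
qed

lemma Wint_pos_def:
  fixes W :: "real \<Rightarrow> complex^'n^'n"
  assumes W: "matrix_weight W" and I: "I \<in> sets lborel" "I \<subseteq> {a..b}"
    and pos: "emeasure lborel I \<noteq> 0"
  shows "pos_def_mat (Wint W I)"
  unfolding pos_def_mat_def
proof (intro conjI allI impI)
  show "hermitian_mat (Wint W I)" by (rule Wint_hermitian[OF W I])
  fix v :: "complex^'n" assume "v \<noteq> 0"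
  define q where "q x = indicator I x * Re (cinner v (W x *v v))" for x
  note q_int = Wint_quadratic_form(1)[OF W I, of v, folded q_def]
  have AE_pos: "AE x in lborel. 0 < Re (cinner v (W x *v v))"
    using W \<open>v \<noteq> 0\<close> by (auto simp: matrix_weight_def pos_def_mat_def elim: AE_mp)
  then have AE_nonneg: "AE x in lborel. 0 \<le> q x"
    by eventually_elim (simp add: q_def)
  have "(\<integral>x. q x \<partial>lborel) \<noteq> 0"
  proof
    assume "(\<integral>x. q x \<partial>lborel) = 0"
    then have "AE x in lborel. q x = 0" using integral_nonneg_eq_0_iff_AE[OF q_int AE_nonneg] by simp
    with AE_pos have "AE x in lborel. x \<notin> I" by eventually_elim (auto simp: q_def)
    then have "emeasure lborel I = 0" using I(1) by (subst (asm) AE_iff_measurable[of I]) auto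
    with pos show False ..
  qed
  then show "0 < Re (cinner v (Wint W I *v v))"
    using integral_nonneg_AE[OF AE_nonneg] Wint_quadratic_form(2)[OF W I, of v, folded q_def] by simp
qed


lemma dyadic_interval_halves:
  assumes "J \<in> dyadic_grid"
  obtains a m b where "a < m" "m < b" "J = {a..<b}" "left_half J = {a..<m}" "right_half J = {m..<b}"
proof -
  obtain n k where J: "J = dyadic_interval n k" using assms dyadic_grid_def by blast
  define p :: real where "p = 2 powr (- real_of_int n)"
  define a where "a = real_of_int k * p"
  define b where "b = (real_of_int k + 1) * p"
  have "a < b" by (simp add: a_def b_def p_def algebra_simps)
  moreover have "J = {a..<b}" by (simp add: J dyadic_interval_def a_def b_def p_def)
  ultimately show ?thesis
    by (intro that[of a "(a + b) / 2" b]) (auto simp: left_half_def right_half_def)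
qed


theorem lemma2p3:
  shows "\<exists>C::real. \<forall>W :: real \<Rightarrow> complex^'n^'n. \<forall>J v j.
     matrix_weight W \<longrightarrow> J \<in> dyadic_grid \<longrightarrow>
     orthonormal_eigenbasis (haar_mat W J) v \<longrightarrow>
       norm (msqrt (Wint W (left_half J)) *v haar_minus W J v j) \<le> C \<and>
       norm (msqrt (Wint W (right_half J)) *v haar_plus W J v j) \<le> C"
proof (intro exI[of _ 1] allI impI)
  fix W :: "real \<Rightarrow> complex^'n^'n" and J v j
  assume W: "matrix_weight W" and J: "J \<in> dyadic_grid"
  obtain a m b where am: "a < m" and mb: "m < b" and J_eq: "J = {a..<b}"
    and L: "left_half J = {a..<m}" and R: "right_half J = {m..<b}"
    using dyadic_interval_halves[OF J] .
  let ?A = "Wint W (left_half J)" and ?B = "Wint W (right_half J)"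
  have A: "pos_def_mat ?A" and B: "pos_def_mat ?B"
    unfolding L R using am mb by (auto intro!: Wint_pos_def[OF W, of _ a b])
  have "Wint W J = Wint W {a..<m} + Wint W {m..<b}"
    unfolding J_eq using am mb
    by (subst ivl_disj_un_two(3)[of a m b, symmetric]) (auto intro!: Wint_Un[OF W, of _ a b])
  then have "Wint W J = ?A + ?B" unfolding L R .
  then have "haar_mat W J = (?A + ?B) ** matrix_inv ?B ** ?A" by (simp add: haar_mat_def)
  then show "norm (msqrt ?A *v haar_minus W J v j) \<le> 1 \<and> norm (msqrt ?B *v haar_plus W J v j) \<le> 1"
    using haar_vector_bounds[OF A B, of "v j"]
    by (simp add: haar_minus_def haar_plus_def haar_w_def)
qed

end
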